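(* Let $g$ be a consistent piece-wise quadratic function with pieces $p_1,\dots,p_N$ and breakpoints $-\infty=\tau_0<\tau_1<\dots<\tau_N=+\infty$. For $\beta\in\mathbb{R}$ and $k\in\{1,\dots,N\}$ let $\ell_{k;\beta}(\alpha)=\beta\alpha-p_k^*(\beta)$, where $p_k^*(\beta)=\sup_\alpha\{\beta\alpha-p_k(\alpha)\}$. Fix $\beta\in\mathbb{R}$, let $\alpha^\star(\beta)\in\arg\max_\alpha\{\beta\alpha-g(\alpha)\}$, and let $k^*$ be such that $\tau_{k^*-1}\le\alpha^\star(\beta)\le\tau_{k^*}$. Then (1) $\alpha^\star(\beta)\notin\{\tau_{k^*-1},\tau_{k^*}\}$; and (2) $\ell_{k^*;\beta}(\alpha^\star(\beta))=g(\alpha^\star(\beta))$ and $\ell_{k^*;\beta}(\alpha)\le g(\alpha)$ for every $\alpha\in\mathbb{R}$.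
   Context: A continuous $g$ is piece-wise quadratic with $N$ pieces if $g=p_k$ on $[\tau_{k-1},\tau_k]$ for quadratic functions $p_k$ with $p_k\ne p_{k+1}$ as functions; it is consistent if every $p_k$ is strongly convex and $g=\min_kp_k$ on $\mathbb{R}$. *)

theory Defs
  imports Complex_Main "HOL-Library.Extended_Real"
begin

definition quadratic :: "(real \<Rightarrow> real) \<Rightarrow> bool" where
  "quadratic p \<longleftrightarrow> (\<exists>a b c. \<forall>x. p x = a * x^2 + b * x + c)"

definition strongly_convex_quadratic :: "(real \<Rightarrow> real) \<Rightarrow> bool" where
  "strongly_convex_quadratic p \<longleftrightarrow> (\<exists>a b c. a > 0 \<and> (\<forall>x. p x = a * x^2 + b * x + c))"

definition piecewise_quadratic ::
  "(real \<Rightarrow> real) \<Rightarrow> nat \<Rightarrow> (nat \<Rightarrow> real \<Rightarrow> real) \<Rightarrow> (nat \<Rightarrow> ereal) \<Rightarrow> bool" where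
  "piecewise_quadratic g N p \<tau> \<longleftrightarrow>
     N \<ge> 1 \<and> continuous_on UNIV g \<and>
     \<tau> 0 = -\<infinity> \<and> \<tau> N = \<infinity> \<and>
     (\<forall>k < N. \<tau> k < \<tau> (Suc k)) \<and>
     (\<forall>k\<in>{1..N}. quadratic (p k)) \<and>
     (\<forall>k\<in>{1..<N}. p k \<noteq> p (Suc k)) \<and>
     (\<forall>k\<in>{1..N}. \<forall>x. \<tau> (k - 1) \<le> ereal x \<and> ereal x \<le> \<tau> k \<longrightarrow> g x = p k x)"

definition consistent_pwq ::
  "(real \<Rightarrow> real) \<Rightarrow> nat \<Rightarrow> (nat \<Rightarrow> real \<Rightarrow> real) \<Rightarrow> (nat \<Rightarrow> ereal) \<Rightarrow> bool" where
  "consistent_pwq g N p \<tau> \<longleftrightarrow>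
     piecewise_quadratic g N p \<tau> \<and>
     (\<forall>k\<in>{1..N}. strongly_convex_quadratic (p k)) \<and>
     (\<forall>x. g x = (MIN k\<in>{1..N}. p k x))"

definition conj :: "(real \<Rightarrow> real) \<Rightarrow> real \<Rightarrow> real" where
  "conj p \<beta> = (SUP \<alpha>. \<beta> * \<alpha> - p \<alpha>)"

definition ell :: "(nat \<Rightarrow> real \<Rightarrow> real) \<Rightarrow> nat \<Rightarrow> real \<Rightarrow> real \<Rightarrow> real" where
  "ell p k \<beta> \<alpha> = \<beta> * \<alpha> - conj (p k) \<beta>"

end

theory Submission
  imports Defs
begin

text \<open>At a maximiser \<open>\<alpha>\<^sup>\<star>\<close> of \<open>\<beta>\<alpha> - g\<close> the active piece \<open>p\<^sub>k\<close> touches \<open>g = min p\<^sub>j\<close> from above,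
  so \<open>\<alpha>\<^sup>\<star>\<close> also maximises \<open>\<beta>\<alpha> - p\<^sub>k\<close>; this gives (2) and, by strong convexity,
  \<open>p\<^sub>k \<alpha> = p\<^sub>k \<alpha>\<^sup>\<star> + \<beta>(\<alpha> - \<alpha>\<^sup>\<star>) + a\<^sub>k(\<alpha> - \<alpha>\<^sup>\<star>)\<^sup>2\<close>. If \<open>\<alpha>\<^sup>\<star>\<close> were a finite breakpoint \<open>\<tau>\<^sub>k\<close>,
  both neighbouring pieces would have this form with the same value and slope; since each
  is the minimum on its own side, their leading coefficients agree, so \<open>p\<^sub>k = p\<^sub>k\<^sub>+\<^sub>1\<close>,
  contradicting the definition of the breakpoints.\<close>

lemma conj_eq_at_maximizer:
  assumes "\<And>x. \<beta> * x - p x \<le> \<beta> * t - p t"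
  shows "conj p \<beta> = \<beta> * t - p t"
  unfolding conj_def by (rule cSup_eq_maximum) (use assms in auto)

lemma maximizer_of_majorant:
  fixes g p :: "real \<Rightarrow> real"
  assumes "\<And>x. \<beta> * x - g x \<le> \<beta> * t - g t" and "\<And>x. g x \<le> p x" and "g t = p t"
  shows "\<beta> * x - p x \<le> \<beta> * t - p t"
  using assms(1)[of x] assms(2)[of x] assms(3) by linarith

lemma strongly_convex_quadratic_at_maximizer:
  fixes p :: "real \<Rightarrow> real"
  assumes a: "a > 0" and p: "\<And>x. p x = a * x\<^sup>2 + b * x + c"
    and max: "\<And>x. \<beta> * x - p x \<le> \<beta> * t - p t"
  shows "p x = p t + \<beta> * (x - t) + a * (x - t)\<^sup>2"
proof -
  define D where "D = \<beta> - b - 2 * a * t"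
  \<comment> \<open>moving from \<open>t\<close> to the vertex \<open>t + D/(2a)\<close> would gain \<open>D\<^sup>2/(4a)\<close>\<close>
  have "(\<beta> * (t + D / (2 * a)) - p (t + D / (2 * a))) - (\<beta> * t - p t) = D\<^sup>2 / (4 * a)"
    using a unfolding p D_def by (simp add: field_simps power2_eq_square)
  with max[of "t + D / (2 * a)"] have "D\<^sup>2 / (4 * a) \<le> 0" by linarith
  with a have "D = 0" by (simp add: divide_le_0_iff)
  then show ?thesis unfolding p D_def by (simp add: algebra_simps power2_eq_square)
qed

lemma tangent_quadratics_eq:
  fixes p q :: "real \<Rightarrow> real"
  assumes p: "\<And>x. p x = c + \<beta> * (x - t) + a * (x - t)\<^sup>2"
    and q: "\<And>x. q x = c + \<beta> * (x - t) + a' * (x - t)\<^sup>2"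
    and "y \<noteq> t" "p y \<le> q y" and "z \<noteq> t" "q z \<le> p z"
  shows "p = q"
proof -
  have "a \<le> a'" using assms(3,4) unfolding p q by simp
  moreover have "a' \<le> a" using assms(5,6) unfolding p q by simp
  ultimately show ?thesis by (simp add: fun_eq_iff p q)
qed

lemma consistent_pwq_le_piece:
  assumes "consistent_pwq g N p \<tau>" and "k \<in> {1..N}"
  shows "g x \<le> p k x"
proof -
  have "g x = Min ((\<lambda>k. p k x) ` {1..N})"
    using assms(1) unfolding consistent_pwq_def by auto
  also have "\<dots> \<le> p k x" using assms(2) by (intro Min_le) auto
  finally show ?thesis .
qed

lemma consistent_pwq_eq_piece:
  assumes "consistent_pwq g N p \<tau>" and "k \<in> {1..N}"
    and "\<tau> (k - 1) \<le> ereal x" and "ereal x \<le> \<tau> k"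
  shows "g x = p k x"
  using assms unfolding consistent_pwq_def piecewise_quadratic_def by blast

lemma consistent_pwq_maximizer_tangent:
  assumes c: "consistent_pwq g N p \<tau>" and k: "k \<in> {1..N}"
    and max: "\<And>x. \<beta> * x - g x \<le> \<beta> * t - g t" and gt: "g t = p k t"
  obtains a where "a > 0" "\<And>x. p k x = g t + \<beta> * (x - t) + a * (x - t)\<^sup>2"
proof -
  obtain a b c' where a: "a > 0" and pk: "\<And>x. p k x = a * x\<^sup>2 + b * x + c'"
    using c k unfolding consistent_pwq_def strongly_convex_quadratic_def by blast
  have "\<And>x. \<beta> * x - p k x \<le> \<beta> * t - p k t"
    using maximizer_of_majorant[OF max consistent_pwq_le_piece[OF c k] gt] .
  note expansion = strongly_convex_quadratic_at_maximizer[OF a pk this]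
  show ?thesis
    by (rule that[OF a]) (metis expansion gt)
qed

lemma consistent_pwq_maximizer_ne_breakpoint:
  assumes c: "consistent_pwq g N p \<tau>" and max: "\<And>x. \<beta> * x - g x \<le> \<beta> * t - g t"
    and "k \<le> N"
  shows "\<tau> k \<noteq> ereal t"
proof
  assume tk: "\<tau> k = ereal t"
  have pw: "piecewise_quadratic g N p \<tau>" using c unfolding consistent_pwq_def by simp
  then have "\<tau> 0 = -\<infinity>" "\<tau> N = \<infinity>" unfolding piecewise_quadratic_def by simp_all
  then have "k \<noteq> 0" "k \<noteq> N" using tk by (metis MInfty_neq_ereal(2), metis PInfty_neq_ereal(2))
  with \<open>k \<le> N\<close> have k: "k \<in> {1..N}" "Suc k \<in> {1..N}" and "Suc (k - 1) = k" by auto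
  have mono: "\<And>j. j < N \<Longrightarrow> \<tau> j < \<tau> (Suc j)" and ne: "p k \<noteq> p (Suc k)"
    using pw k unfolding piecewise_quadratic_def by auto
  have lt: "\<tau> (k - 1) < \<tau> k" "\<tau> k < \<tau> (Suc k)"
    using mono[of "k - 1"] mono[of k] k \<open>Suc (k - 1) = k\<close> by auto
  have gk: "g t = p k t"
    using consistent_pwq_eq_piece[OF c k(1), of t] lt(1) tk by simp
  have gk': "g t = p (Suc k) t"
    using consistent_pwq_eq_piece[OF c k(2), of t] lt(2) tk by simp
  obtain a where pk: "\<And>x. p k x = g t + \<beta> * (x - t) + a * (x - t)\<^sup>2"
    using consistent_pwq_maximizer_tangent[OF c k(1) max gk] by blast
  obtain a' where pk': "\<And>x. p (Suc k) x = g t + \<beta> * (x - t) + a' * (x - t)\<^sup>2"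
    using consistent_pwq_maximizer_tangent[OF c k(2) max gk'] by blast
  obtain y where y: "\<tau> (k - 1) < ereal y" "ereal y < \<tau> k" using lt(1) ereal_dense2 by blast
  obtain z where z: "\<tau> k < ereal z" "ereal z < \<tau> (Suc k)" using lt(2) ereal_dense2 by blast
  have "g y = p k y"
    using consistent_pwq_eq_piece[OF c k(1)] y by (simp add: less_imp_le)
  then have below: "p k y \<le> p (Suc k) y" using consistent_pwq_le_piece[OF c k(2)] by metis
  have "g z = p (Suc k) z"
    using consistent_pwq_eq_piece[OF c k(2)] z by (simp add: less_imp_le)
  then have above: "p (Suc k) z \<le> p k z" using consistent_pwq_le_piece[OF c k(1)] by metis
  have "y \<noteq> t" "z \<noteq> t" using y z tk by auto
  from tangent_quadratics_eq[OF pk pk' \<open>y \<noteq> t\<close> below \<open>z \<noteq> t\<close> above] ne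
  show False by contradiction
qed

theorem lemma6:
  fixes g :: "real \<Rightarrow> real" and N :: nat and p :: "nat \<Rightarrow> real \<Rightarrow> real"
    and \<tau> :: "nat \<Rightarrow> ereal" and \<beta> \<alpha>s :: real and ks :: nat
  assumes "consistent_pwq g N p \<tau>"
    and "\<forall>\<alpha>. \<beta> * \<alpha> - g \<alpha> \<le> \<beta> * \<alpha>s - g \<alpha>s"
    and "ks \<in> {1..N}" and "\<tau> (ks - 1) \<le> ereal \<alpha>s" and "ereal \<alpha>s \<le> \<tau> ks"
  shows "ereal \<alpha>s \<noteq> \<tau> (ks - 1) \<and> ereal \<alpha>s \<noteq> \<tau> ks \<and>
         ell p ks \<beta> \<alpha>s = g \<alpha>s \<and> (\<forall>\<alpha>. ell p ks \<beta> \<alpha> \<le> g \<alpha>)"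
proof -
  have max: "\<And>x. \<beta> * x - g x \<le> \<beta> * \<alpha>s - g \<alpha>s" using assms(2) by blast
  have "ks - 1 \<le> N" "ks \<le> N" using assms(3) by auto
  then have breaks: "ereal \<alpha>s \<noteq> \<tau> (ks - 1)" "ereal \<alpha>s \<noteq> \<tau> ks"
    using consistent_pwq_maximizer_ne_breakpoint[OF assms(1) max] by (metis, metis)
  have gs: "g \<alpha>s = p ks \<alpha>s" using consistent_pwq_eq_piece[OF assms(1,3-5)] .
  have "\<And>x. \<beta> * x - p ks x \<le> \<beta> * \<alpha>s - p ks \<alpha>s"
    using maximizer_of_majorant[OF max consistent_pwq_le_piece[OF assms(1,3)] gs] .
  note conj = conj_eq_at_maximizer[OF this]
  have ell: "ell p ks \<beta> x = g \<alpha>s + \<beta> * (x - \<alpha>s)" for x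
    unfolding ell_def gs conj by (simp add: algebra_simps)
  show ?thesis
  proof (intro conjI allI breaks)
    show "ell p ks \<beta> \<alpha>s = g \<alpha>s" by (simp add: ell)
    show "ell p ks \<beta> x \<le> g x" for x
      using max[of x] unfolding ell right_diff_distrib by linarith
  qed
qed

end
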